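(* Let $t\in\{0,\dots,T\}$ and let $\sigma_t:\mathcal{M}_t\to\mathcal{P}_t$, $\sigma_{t+1}:\mathcal{M}_{t+1}\to\mathcal{P}_{t+1}$ with $\Pi_t=\sigma_t(M_t)$, $\Pi_{t+1}=\sigma_{t+1}(M_{t+1})$. Suppose (a) there is a function $\bar f_t:\mathcal{P}_t\times\mathcal{U}_t\times\mathcal{Y}_{t+1}\to\mathcal{P}_{t+1}$ such that $\Pi_{t+1}=\bar f_t(\Pi_t,U_t,Y_{t+1})$, i.e. $\sigma_{t+1}(m_{t+1})=\bar f_t(\sigma_t(m_t),u_t,y_{t+1})$ whenever $m_{t+1}$ consists of $m_t$, $u_t$ and $y_{t+1}$; and (b) $[[Y_{t+1}|m_t,u_t]]=[[Y_{t+1}|\sigma_t(m_t),u_t]]$ for all $m_t\in[[M_t]]$, $u_t\in[[U_t]]$. Then $[[\Pi_{t+1}|m_t,u_t]]=[[\Pi_{t+1}|\sigma_t(m_t),u_t]]$ for all $m_t\in[[M_t]]$ and $u_t\in[[U_t]]$.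
   Context: Uncertain variables: fix a sample space $\Omega$; an uncertain variable with values in a set $\mathcal{X}$ is a map $X:\Omega\to\mathcal{X}$, with marginal range $[[X]]:=\{X(\omega):\omega\in\Omega\}$; uncertain variables are independent if their joint range is the product of their marginal ranges. System: horizon $T\in\mathbb{N}$. For $t=0,\dots,T$ there are independent disturbances $W_t\in\mathcal{W}_t$, actions $U_t\in\mathcal{U}_t$ taking values in a given set $[[U_t]]\subseteq\mathcal{U}_t$, observations $Y_0=h_0(W_0)$, $Y_{t+1}=h_{t+1}(W_{0:t},U_{0:t})$, and costs $C_t=d_t(W_{0:t},U_{0:t})\in\mathcal{C}_t\subset\mathbb{R}_{\ge0}$. The memory is $M_t=(Y_{0:t},U_{0:t-1})\in\mathcal{M}_t:=\prod_{\ell=0}^t\mathcal{Y}_\ell\times\prod_{\ell=0}^{t-1}\mathcal{U}_\ell$. Strategy-independent ranges: for $m_t=(y_{0:t},u_{0:t-1})$ let $\mathcal{W}(m_t)$ be the set of $w_{0:t}\in\prod_{\ell=0}^t[[W_\ell]]$ with $y_0=h_0(w_0)$ and $y_\ell=h_\ell(w_{0:\ell-1},u_{0:\ell-1})$ for $\ell=1,\dots,t$. Let $[[M_t]]$ be the set of such $m_t$ with $u_\ell\in[[U_\ell]]$ and $\mathcal{W}(m_t)\neq\emptyset$. For $m_t\in[[M_t]]$, $u_t\in[[U_t]]$: $[[Y_{t+1}|m_t,u_t]]:=\{h_{t+1}(w_{0:t},u_{0:t}):w_{0:t}\in\mathcal{W}(m_t)\}$, $[[M_{t+1}|m_t,u_t]]:=\{(m_t,u_t,y_{t+1}):y_{t+1}\in[[Y_{t+1}|m_t,u_t]]\}$.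 For $\Pi_t=\sigma_t(M_t)$: $[[M_t|\pi_t]]:=\{m_t\in[[M_t]]:\sigma_t(m_t)=\pi_t\}$, $[[\Pi_{t+1}|m_t,u_t]]:=\{\sigma_{t+1}(m_{t+1}):m_{t+1}\in[[M_{t+1}|m_t,u_t]]\}$, and for $Z\in\{Y_{t+1},\Pi_{t+1}\}$, $[[Z|\pi_t,u_t]]:=\bigcup_{m_t\in[[M_t|\pi_t]]}[[Z|m_t,u_t]]$. *)

theory Defs
  imports Main
begin

text \<open>
Time-indexed spaces are modelled by fixed ambient types:
disturbances have type 'w, actions type 'u, observations type 'y.
A finite sequence x_{0:t} is a list of length t+1 with (xs ! l) = x_l.
A memory m_t = (y_{0:t}, u_{0:t-1}) is a pair (ys, us) of lists with
length ys = t+1 and length us = t.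
The system data are:
  h0 :: 'w => 'y                       (Y_0 = h0 W_0)
  h  :: nat => 'w list => 'u list => 'y (Y_l = h l W_{0:l-1} U_{0:l-1}, l >= 1)
  WR l = [[W_l]]  (marginal range of the independent disturbance W_l)
  UR l = [[U_l]]  (given range of the action U_l)
\<close>

type_synonym ('y,'u) memory = "'y list \<times> 'u list"

definition is_memory :: "nat \<Rightarrow> ('y,'u) memory \<Rightarrow> bool" where
  "is_memory t m \<longleftrightarrow> length (fst m) = Suc t \<and> length (snd m) = t"

definition Wcons ::
  "('w \<Rightarrow> 'y) \<Rightarrow> (nat \<Rightarrow> 'w list \<Rightarrow> 'u list \<Rightarrow> 'y) \<Rightarrow> (nat \<Rightarrow> 'w set)
   \<Rightarrow> nat \<Rightarrow> ('y,'u) memory \<Rightarrow> 'w list set" where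
  "Wcons h0 h WR t m = {ws. length ws = Suc t \<and> (\<forall>l\<le>t. ws ! l \<in> WR l)
      \<and> fst m ! 0 = h0 (ws ! 0)
      \<and> (\<forall>l\<in>{1..t}. fst m ! l = h l (take l ws) (take l (snd m)))}"

definition MR ::
  "('w \<Rightarrow> 'y) \<Rightarrow> (nat \<Rightarrow> 'w list \<Rightarrow> 'u list \<Rightarrow> 'y) \<Rightarrow> (nat \<Rightarrow> 'w set) \<Rightarrow> (nat \<Rightarrow> 'u set)
   \<Rightarrow> nat \<Rightarrow> ('y,'u) memory set" where
  "MR h0 h WR UR t = {m. is_memory t m \<and> (\<forall>l<t. snd m ! l \<in> UR l)
      \<and> Wcons h0 h WR t m \<noteq> {}}"

definition YR_m ::
  "('w \<Rightarrow> 'y) \<Rightarrow> (nat \<Rightarrow> 'w list \<Rightarrow> 'u list \<Rightarrow> 'y) \<Rightarrow> (nat \<Rightarrow> 'w set)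
   \<Rightarrow> nat \<Rightarrow> ('y,'u) memory \<Rightarrow> 'u \<Rightarrow> 'y set" where
  "YR_m h0 h WR t m u = (\<lambda>ws. h (Suc t) ws (snd m @ [u])) ` Wcons h0 h WR t m"

definition MR_m ::
  "('w \<Rightarrow> 'y) \<Rightarrow> (nat \<Rightarrow> 'w list \<Rightarrow> 'u list \<Rightarrow> 'y) \<Rightarrow> (nat \<Rightarrow> 'w set)
   \<Rightarrow> nat \<Rightarrow> ('y,'u) memory \<Rightarrow> 'u \<Rightarrow> ('y,'u) memory set" where
  "MR_m h0 h WR t m u = (\<lambda>y. (fst m @ [y], snd m @ [u])) ` YR_m h0 h WR t m u"

definition MR_pi ::
  "('w \<Rightarrow> 'y) \<Rightarrow> (nat \<Rightarrow> 'w list \<Rightarrow> 'u list \<Rightarrow> 'y) \<Rightarrow> (nat \<Rightarrow> 'w set) \<Rightarrow> (nat \<Rightarrow> 'u set)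
   \<Rightarrow> (('y,'u) memory \<Rightarrow> 'p) \<Rightarrow> nat \<Rightarrow> 'p \<Rightarrow> ('y,'u) memory set" where
  "MR_pi h0 h WR UR \<sigma> t \<pi> = {m \<in> MR h0 h WR UR t. \<sigma> m = \<pi>}"

definition PiR_m ::
  "('w \<Rightarrow> 'y) \<Rightarrow> (nat \<Rightarrow> 'w list \<Rightarrow> 'u list \<Rightarrow> 'y) \<Rightarrow> (nat \<Rightarrow> 'w set)
   \<Rightarrow> (('y,'u) memory \<Rightarrow> 'q) \<Rightarrow> nat \<Rightarrow> ('y,'u) memory \<Rightarrow> 'u \<Rightarrow> 'q set" where
  "PiR_m h0 h WR \<sigma>' t m u = \<sigma>' ` MR_m h0 h WR t m u"

definition YR_pi ::
  "('w \<Rightarrow> 'y) \<Rightarrow> (nat \<Rightarrow> 'w list \<Rightarrow> 'u list \<Rightarrow> 'y) \<Rightarrow> (nat \<Rightarrow> 'w set) \<Rightarrow> (nat \<Rightarrow> 'u set)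
   \<Rightarrow> (('y,'u) memory \<Rightarrow> 'p) \<Rightarrow> nat \<Rightarrow> 'p \<Rightarrow> 'u \<Rightarrow> 'y set" where
  "YR_pi h0 h WR UR \<sigma> t \<pi> u = (\<Union>m\<in>MR_pi h0 h WR UR \<sigma> t \<pi>. YR_m h0 h WR t m u)"

definition PiR_pi ::
  "('w \<Rightarrow> 'y) \<Rightarrow> (nat \<Rightarrow> 'w list \<Rightarrow> 'u list \<Rightarrow> 'y) \<Rightarrow> (nat \<Rightarrow> 'w set) \<Rightarrow> (nat \<Rightarrow> 'u set)
   \<Rightarrow> (('y,'u) memory \<Rightarrow> 'p) \<Rightarrow> (('y,'u) memory \<Rightarrow> 'q) \<Rightarrow> nat \<Rightarrow> 'p \<Rightarrow> 'u \<Rightarrow> 'q set" where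
  "PiR_pi h0 h WR UR \<sigma> \<sigma>' t \<pi> u = (\<Union>m\<in>MR_pi h0 h WR UR \<sigma> t \<pi>. PiR_m h0 h WR \<sigma>' t m u)"

end

theory Submission
  imports Defs
begin

text \<open>
  If the new information state is computed recursively as
  \<open>\<Pi>\<^sub>t\<^sub>+\<^sub>1 = f(\<Pi>\<^sub>t, U\<^sub>t, Y\<^sub>t\<^sub>+\<^sub>1)\<close>, then every conditional range of \<open>\<Pi>\<^sub>t\<^sub>+\<^sub>1\<close> is the image of the
  corresponding conditional range of \<open>Y\<^sub>t\<^sub>+\<^sub>1\<close> under \<open>f(\<pi>\<^sub>t, u\<^sub>t, -)\<close>; images commute with
  the union over \<open>[[M\<^sub>t | \<pi>\<^sub>t]]\<close>, so equality of the observation ranges carries over to the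
  information-state ranges.
\<close>

definition recursive_update ::
  "nat \<Rightarrow> (('y,'u) memory \<Rightarrow> 'p) \<Rightarrow> (('y,'u) memory \<Rightarrow> 'q) \<Rightarrow> ('p \<Rightarrow> 'u \<Rightarrow> 'y \<Rightarrow> 'q) \<Rightarrow> bool"
  where "recursive_update t \<sigma> \<sigma>' f \<longleftrightarrow>
    (\<forall>m u y. is_memory t m \<longrightarrow> \<sigma>' (fst m @ [y], snd m @ [u]) = f (\<sigma> m) u y)"

lemma PiR_m_eq_image_YR_m:
  assumes "recursive_update t \<sigma> \<sigma>' f" and "is_memory t m"
  shows "PiR_m h0 h WR \<sigma>' t m u = f (\<sigma> m) u ` YR_m h0 h WR t m u"
  using assms unfolding recursive_update_def PiR_m_def MR_m_def image_image by simp

lemma PiR_pi_eq_image_YR_pi: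
  assumes "recursive_update t \<sigma> \<sigma>' f"
  shows "PiR_pi h0 h WR UR \<sigma> \<sigma>' t \<pi> u = f \<pi> u ` YR_pi h0 h WR UR \<sigma> t \<pi> u"
proof -
  have "PiR_m h0 h WR \<sigma>' t m u = f \<pi> u ` YR_m h0 h WR t m u"
    if "m \<in> MR_pi h0 h WR UR \<sigma> t \<pi>" for m
  proof -
    from that have "is_memory t m" and "\<sigma> m = \<pi>"
      by (simp_all add: MR_pi_def MR_def)
    with assms show ?thesis
      by (simp add: PiR_m_eq_image_YR_m)
  qed
  then show ?thesis
    unfolding PiR_pi_def YR_pi_def image_UN by simp
qed

text \<open>The hypothesis \<open>t \<le> T\<close> only records the horizon; the argument does not use it.\<close>

theorem lemma1:
  fixes h0 :: "'w \<Rightarrow> 'y" and h :: "nat \<Rightarrow> 'w list \<Rightarrow> 'u list \<Rightarrow> 'y"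
    and WR :: "nat \<Rightarrow> 'w set" and UR :: "nat \<Rightarrow> 'u set"
    and \<sigma> :: "('y,'u) memory \<Rightarrow> 'p" and \<sigma>' :: "('y,'u) memory \<Rightarrow> 'q"
    and T t :: nat
  assumes "t \<le> T"
    and a: "\<exists>f :: 'p \<Rightarrow> 'u \<Rightarrow> 'y \<Rightarrow> 'q. \<forall>m u y. is_memory t m \<longrightarrow>
              \<sigma>' (fst m @ [y], snd m @ [u]) = f (\<sigma> m) u y"
    and b: "\<forall>m \<in> MR h0 h WR UR t. \<forall>u \<in> UR t.
              YR_m h0 h WR t m u = YR_pi h0 h WR UR \<sigma> t (\<sigma> m) u"
  shows "\<forall>m \<in> MR h0 h WR UR t. \<forall>u \<in> UR t.
           PiR_m h0 h WR \<sigma>' t m u = PiR_pi h0 h WR UR \<sigma> \<sigma>' t (\<sigma> m) u"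
proof (intro ballI)
  fix m u assume m: "m \<in> MR h0 h WR UR t" and u: "u \<in> UR t"
  obtain f :: "'p \<Rightarrow> 'u \<Rightarrow> 'y \<Rightarrow> 'q" where f: "recursive_update t \<sigma> \<sigma>' f"
    using a unfolding recursive_update_def by blast
  have "is_memory t m"
    using m by (simp add: MR_def)
  with f have "PiR_m h0 h WR \<sigma>' t m u = f (\<sigma> m) u ` YR_m h0 h WR t m u"
    by (rule PiR_m_eq_image_YR_m)
  also have "\<dots> = f (\<sigma> m) u ` YR_pi h0 h WR UR \<sigma> t (\<sigma> m) u"
    using b m u by simp
  also have "\<dots> = PiR_pi h0 h WR UR \<sigma> \<sigma>' t (\<sigma> m) u"
    using f by (rule PiR_pi_eq_image_YR_pi[symmetric])
  finally show "PiR_m h0 h WR \<sigma>' t m u = PiR_pi h0 h WR UR \<sigma> \<sigma>' t (\<sigma> m) u" .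
qed

end
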